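(* There exists $\bar\eta>0$ such that for every $\eta_1\ge\bar\eta$, every solution $\phi$ of $\phi''+f(\xi,\phi,\phi')=0$ with $\phi(\eta_1)=1$ and $\phi'(\eta_1)\le0$ satisfies $\phi'(\eta_2)<-1$ for every $\eta_2>\eta_1$ (in the maximal existence interval of $\phi$) with $\phi(\eta_2)\in[0,1/2]$.
   Context: Fix $d>2$. Define $f(\eta,v,w)=\frac{d+1}{\eta}w-\frac\eta2 w+\frac1d\eta v w+v^2-v$ for $\eta>0$, $v,w\in\mathbb R$. For $(\eta_0,v_0,w_0)$ with $\eta_0>0$, $\phi(\xi;\eta_0,v_0,w_0)$ denotes the solution of $\phi''+f(\xi,\phi,\phi')=0$ (derivatives in $\xi$) with $\phi(\eta_0)=v_0$, $\phi'(\eta_0)=w_0$. *)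

theory Defs
  imports "HOL-Analysis.Analysis"
begin

definition fODE :: "real \<Rightarrow> real \<Rightarrow> real \<Rightarrow> real \<Rightarrow> real" where
  "fODE d \<eta> v w = (d + 1) / \<eta> * w - \<eta> / 2 * w + (1 / d) * \<eta> * v * w + v\<^sup>2 - v"

definition is_solution :: "real \<Rightarrow> (real \<Rightarrow> real) \<Rightarrow> (real \<Rightarrow> real) \<Rightarrow> real set \<Rightarrow> bool" where
  "is_solution d \<phi> \<psi> I \<longleftrightarrow>
     (\<forall>\<xi>\<in>I. (\<phi> has_real_derivative \<psi> \<xi>) (at \<xi> within I) \<and>
             (\<psi> has_real_derivative (- fODE d \<xi> (\<phi> \<xi>) (\<psi> \<xi>))) (at \<xi> within I))"

end

theory Submission
  imports Defs
begin

text \<open>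
  Writing \<open>\<psi> = \<phi>'\<close>, the equation reads \<open>\<psi>' = A \<psi> + \<phi> (1 - \<phi>)\<close> with the damping
  \<open>A = \<xi>/2 - \<xi> \<phi>/d - (d+1)/\<xi>\<close>, and since \<open>d > 2\<close> we have \<open>A \<ge> 4\<close> wherever \<open>\<phi> \<le> 1\<close>,
  provided \<open>\<xi>\<close> is large. This makes the wedge \<open>\<phi> \<le> 1, \<psi> \<le> -3 (1 - \<phi>)\<close> forward invariant.
  The solution starts in it at \<open>\<eta>\<^sub>1\<close>, hence \<open>\<psi>(\<eta>\<^sub>2) \<le> -3/2\<close> once \<open>\<phi>(\<eta>\<^sub>2) \<le> 1/2\<close>.
  The corner \<open>(1, 0)\<close> of the wedge is an equilibrium, so a first-exit argument does not
  apply; instead, with \<open>u = \<psi> + 3 (1 - \<phi>)\<close>, the quantity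
  \<open>V = (max u 0)\<^sup>2 + (max (\<phi> - 1) 0)\<^sup>2\<close> satisfies \<open>V' \<le> C V\<close> and vanishes initially,
  so it vanishes throughout by Gronwall's argument.
\<close>

lemma has_real_derivative_pos_part_square:
  "((\<lambda>y::real. (max y 0)\<^sup>2) has_real_derivative 2 * max y 0) (at y)"
proof (cases y "0::real" rule: linorder_cases)
  case less
  have "((\<lambda>y::real. 0) has_real_derivative 2 * max y 0) (at y)"
    using less by simp
  then show ?thesis
    by (rule has_field_derivative_transform_within_open[of _ _ _ "{..<0}"]) (use less in auto)
next
  case greater
  have "((\<lambda>y::real. y\<^sup>2) has_real_derivative 2 * max y 0) (at y)"
    using greater by (auto intro!: derivative_eq_intros)
  then show ?thesis
    by (rule has_field_derivative_transform_within_open[of _ _ _ "{0<..}"]) (use greater in auto)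
next
  case equal
  have "(\<lambda>h::real. (max h 0)\<^sup>2 / h) \<midarrow>0\<rightarrow> 0"
  proof (rule Lim_null_comparison)
    show "\<forall>\<^sub>F h in at 0. norm ((max h 0)\<^sup>2 / h) \<le> \<bar>h\<bar>"
      by (auto simp: power2_eq_square abs_mult max_def divide_simps)
    show "((\<lambda>h::real. \<bar>h\<bar>) \<longlongrightarrow> 0) (at 0)"
      using tendsto_rabs[OF tendsto_ident_at[of "0::real" UNIV]] by simp
  qed
  then show ?thesis
    using equal by (simp add: DERIV_def)
qed

lemma DERIV_pos_part_square:
  assumes "(f has_real_derivative f') (at x within S)"
  shows "((\<lambda>x. (max (f x) 0)\<^sup>2) has_real_derivative 2 * max (f x) 0 * f') (at x within S)"
  using DERIV_chain2[OF has_real_derivative_pos_part_square assms] .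

lemma gronwall_vanishes:
  fixes V V' :: "real \<Rightarrow> real"
  assumes "a \<le> b"
    and V': "\<And>t. t \<in> {a..b} \<Longrightarrow> (V has_real_derivative V' t) (at t within {a..b})"
    and growth: "\<And>t. t \<in> {a..b} \<Longrightarrow> V' t \<le> C * V t"
    and nonneg: "\<And>t. t \<in> {a..b} \<Longrightarrow> 0 \<le> V t"
    and "V a = 0"
  shows "V b = 0"
proof -
  define W where "W t = V t * exp (- C * t)" for t
  have W': "(W has_real_derivative exp (- C * t) * (V' t - C * V t)) (at t within {a..b})"
    if "t \<in> {a..b}" for t
    unfolding W_def using V'[OF that]
    by (auto intro!: derivative_eq_intros simp: algebra_simps)
  have "W b \<le> W a"
  proof (rule DERIV_nonpos_imp_decreasing_open[OF \<open>a \<le> b\<close>])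
    show "\<exists>y. (W has_real_derivative y) (at t) \<and> y \<le> 0" if "a < t" "t < b" for t
      using W'[of t] growth[of t] that
      by (intro exI[of _ "exp (- C * t) * (V' t - C * V t)"])
        (auto simp: at_within_Icc_at mult_nonneg_nonpos)
    show "continuous_on {a..b} W"
      using W' by (rule DERIV_continuous_on)
  qed
  then have "V b \<le> 0"
    using \<open>V a = 0\<close> by (simp add: W_def mult_le_0_iff)
  then show ?thesis
    using nonneg[of b] \<open>a \<le> b\<close> by simp
qed

(* Pointwise form of V' \<le> C V for the function V of the header, with general slope k:
   the left side is V' after substituting \<psi>' = A \<psi> + \<phi> (1 - \<phi>). *)
lemma pos_part_energy_deriv_le:
  fixes A k L \<phi> \<psi> :: real
  assumes AL: "\<bar>A - k\<bar> \<le> L" and BL: "\<bar>k * (A - k) - \<phi>\<bar> \<le> L"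
    and damped: "\<phi> \<le> 1 \<Longrightarrow> 1 \<le> k * (A - k)"
  defines "p \<equiv> max (\<psi> + k * (1 - \<phi>)) 0" and "q \<equiv> max (\<phi> - 1) 0"
  shows "2 * p * (A * \<psi> + \<phi> * (1 - \<phi>) - k * \<psi>) + 2 * q * \<psi>
           \<le> (3 * L + 2 * \<bar>k\<bar> + 1) * (p\<^sup>2 + q\<^sup>2)"
proof -
  define u where "u = \<psi> + k * (1 - \<phi>)"
  have p0: "0 \<le> p" and q0: "0 \<le> q" and L0: "0 \<le> L"
    using AL unfolding p_def q_def by auto
  have u': "A * \<psi> + \<phi> * (1 - \<phi>) - k * \<psi> = (A - k) * u + (1 - \<phi>) * (\<phi> - k * (A - k))"
    unfolding u_def by (simp add: algebra_simps)
  have pu: "p * (A * \<psi> + \<phi> * (1 - \<phi>) - k * \<psi>) \<le> L * p\<^sup>2 + L * p * q"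
  proof (cases "u \<le> 0")
    case True
    then show ?thesis by (simp add: p_def u_def)
  next
    case False
    then have "p = u" by (simp add: p_def u_def)
    then have decomp: "p * (A * \<psi> + \<phi> * (1 - \<phi>) - k * \<psi>)
        = (A - k) * p\<^sup>2 + p * ((1 - \<phi>) * (\<phi> - k * (A - k)))"
      unfolding u' by (simp add: algebra_simps power2_eq_square)
    have "(A - k) * p\<^sup>2 \<le> L * p\<^sup>2"
      using AL by (intro mult_right_mono) auto
    moreover have "p * ((1 - \<phi>) * (\<phi> - k * (A - k))) \<le> L * p * q"
    proof (cases "\<phi> \<le> 1")
      case True
      then have "(1 - \<phi>) * (\<phi> - k * (A - k)) \<le> 0"
        using damped by (intro mult_nonneg_nonpos) auto
      then have "p * ((1 - \<phi>) * (\<phi> - k * (A - k))) \<le> 0"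
        using p0 by (simp add: mult_nonneg_nonpos)
      moreover have "0 \<le> L * p * q"
        using p0 q0 L0 by simp
      ultimately show ?thesis by linarith
    next
      case False
      then have "p * ((1 - \<phi>) * (\<phi> - k * (A - k))) = p * q * (k * (A - k) - \<phi>)"
        by (simp add: q_def algebra_simps)
      also have "\<dots> \<le> p * q * L"
        using BL p0 q0 by (intro mult_left_mono) auto
      finally show ?thesis by (simp add: algebra_simps)
    qed
    ultimately show ?thesis
      using decomp by linarith
  qed
  have q\<psi>: "q * \<psi> \<le> q * p + \<bar>k\<bar> * q\<^sup>2"
  proof (cases "\<phi> \<le> 1")
    case True
    then show ?thesis by (simp add: q_def)
  next
    case False
    then have "\<psi> = u + k * q"
      by (simp add: q_def u_def algebra_simps)
    also have "\<dots> \<le> p + \<bar>k\<bar> * q"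
      using q0 by (intro add_mono mult_right_mono) (auto simp: p_def u_def)
    finally have "q * \<psi> \<le> q * (p + \<bar>k\<bar> * q)"
      using q0 by (rule mult_left_mono)
    then show ?thesis
      by (simp add: power2_eq_square algebra_simps)
  qed
  have "2 * (p * q) \<le> p\<^sup>2 + q\<^sup>2"
    using sum_squares_ge_zero[of "p - q" 0] by (simp add: power2_eq_square algebra_simps)
  then have pq: "(L + 1) * (2 * (p * q)) \<le> (L + 1) * (p\<^sup>2 + q\<^sup>2)"
    using L0 by (intro mult_left_mono) auto
  have "2 * p * (A * \<psi> + \<phi> * (1 - \<phi>) - k * \<psi>) + 2 * q * \<psi>
      \<le> 2 * L * p\<^sup>2 + (L + 1) * (2 * (p * q)) + 2 * \<bar>k\<bar> * q\<^sup>2"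
    using pu q\<psi> by (simp add: algebra_simps)
  also have "\<dots> \<le> (3 * L + 2 * \<bar>k\<bar> + 1) * (p\<^sup>2 + q\<^sup>2) - 2 * \<bar>k\<bar> * p\<^sup>2 - 2 * L * q\<^sup>2"
    using pq by (simp add: algebra_simps)
  also have "\<dots> \<le> (3 * L + 2 * \<bar>k\<bar> + 1) * (p\<^sup>2 + q\<^sup>2)"
    using mult_nonneg_nonneg[OF abs_ge_zero zero_le_power2, of k p]
      mult_nonneg_nonneg[OF L0 zero_le_power2, of q] by linarith
  finally show ?thesis .
qed

lemma wedge_forward_invariant:
  fixes \<phi> \<psi> A :: "real \<Rightarrow> real"
  assumes "a \<le> b"
    and \<phi>': "\<And>\<xi>. \<xi> \<in> {a..b} \<Longrightarrow> (\<phi> has_real_derivative \<psi> \<xi>) (at \<xi> within {a..b})"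
    and \<psi>': "\<And>\<xi>. \<xi> \<in> {a..b} \<Longrightarrow>
      (\<psi> has_real_derivative A \<xi> * \<psi> \<xi> + \<phi> \<xi> * (1 - \<phi> \<xi>)) (at \<xi> within {a..b})"
    and "continuous_on {a..b} A"
    and damped: "\<And>\<xi>. \<xi> \<in> {a..b} \<Longrightarrow> \<phi> \<xi> \<le> 1 \<Longrightarrow> 1 \<le> k * (A \<xi> - k)"
    and "\<phi> a \<le> 1" and "\<psi> a \<le> - k * (1 - \<phi> a)"
  shows "\<phi> b \<le> 1 \<and> \<psi> b \<le> - k * (1 - \<phi> b)"
proof -
  define u where "u \<xi> = \<psi> \<xi> + k * (1 - \<phi> \<xi>)" for \<xi>
  define V where "V \<xi> = (max (u \<xi>) 0)\<^sup>2 + (max (\<phi> \<xi> - 1) 0)\<^sup>2" for \<xi>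
  define V' where "V' \<xi> = 2 * max (u \<xi>) 0 * (A \<xi> * \<psi> \<xi> + \<phi> \<xi> * (1 - \<phi> \<xi>) - k * \<psi> \<xi>)
                         + 2 * max (\<phi> \<xi> - 1) 0 * \<psi> \<xi>" for \<xi>
  have "continuous_on {a..b} \<phi>"
    using \<phi>' by (rule DERIV_continuous_on)
  then have "compact ((\<lambda>\<xi>. \<bar>A \<xi> - k\<bar> + \<bar>k * (A \<xi> - k) - \<phi> \<xi>\<bar>) ` {a..b})"
    using \<open>continuous_on {a..b} A\<close> by (intro compact_continuous_image continuous_intros) auto
  then obtain L where L: "\<And>\<xi>. \<xi> \<in> {a..b} \<Longrightarrow> \<bar>A \<xi> - k\<bar> + \<bar>k * (A \<xi> - k) - \<phi> \<xi>\<bar> \<le> L"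
    by (fastforce dest: compact_imp_bounded simp: bounded_real)
  have "V b = 0"
  proof (rule gronwall_vanishes[OF \<open>a \<le> b\<close>])
    show "(V has_real_derivative V' \<xi>) (at \<xi> within {a..b})" if "\<xi> \<in> {a..b}" for \<xi>
    proof -
      have "(u has_real_derivative A \<xi> * \<psi> \<xi> + \<phi> \<xi> * (1 - \<phi> \<xi>) - k * \<psi> \<xi>)
          (at \<xi> within {a..b})"
        unfolding u_def using \<phi>'[OF that] \<psi>'[OF that] by (auto intro!: derivative_eq_intros)
      moreover have "((\<lambda>\<xi>. \<phi> \<xi> - 1) has_real_derivative \<psi> \<xi>) (at \<xi> within {a..b})"
        using \<phi>'[OF that] by (auto intro!: derivative_eq_intros)
      ultimately show ?thesis
        unfolding V_def V'_def by (intro DERIV_add DERIV_pos_part_square)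
    qed
    show "V' \<xi> \<le> (3 * L + 2 * \<bar>k\<bar> + 1) * V \<xi>" if "\<xi> \<in> {a..b}" for \<xi>
      unfolding V_def V'_def u_def
      using L[OF that] damped[OF that] by (intro pos_part_energy_deriv_le) auto
    show "0 \<le> V \<xi>" for \<xi>
      by (simp add: V_def)
    show "V a = 0"
      using \<open>\<phi> a \<le> 1\<close> \<open>\<psi> a \<le> - k * (1 - \<phi> a)\<close> by (simp add: V_def u_def)
  qed
  then show ?thesis
    by (auto simp: V_def u_def add_nonneg_eq_0_iff max_def split: if_split_asm)
qed

definition fODE_damping :: "real \<Rightarrow> real \<Rightarrow> real \<Rightarrow> real" where
  "fODE_damping d \<eta> v = \<eta> / 2 - \<eta> * v / d - (d + 1) / \<eta>"

lemma minus_fODE_eq: "- fODE d \<eta> v w = fODE_damping d \<eta> v * w + v * (1 - v)"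
  by (simp add: fODE_def fODE_damping_def field_simps power2_eq_square)

lemma fODE_damping_eventually_ge:
  assumes "d > 2"
  shows "\<exists>\<eta>0 > 0. \<forall>\<eta> \<ge> \<eta>0. \<forall>v \<le> 1. M \<le> fODE_damping d \<eta> v"
proof -
  define c where "c = 1/2 - 1/d"
  have "c > 0"
    using assms by (simp add: c_def field_simps)
  define \<eta>0 where "\<eta>0 = max 1 ((d + 1 + M) / c)"
  have "M \<le> fODE_damping d \<eta> v" if "\<eta>0 \<le> \<eta>" "v \<le> 1" for \<eta> v
  proof -
    have "\<eta> \<ge> 1" and "\<eta> * c \<ge> d + 1 + M"
      using that \<open>c > 0\<close> by (auto simp: \<eta>0_def field_simps)
    moreover have "\<eta> * v / d \<le> \<eta> / d"
      using that \<open>\<eta> \<ge> 1\<close> assms by (simp add: divide_right_mono)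
    moreover have "(d + 1) / \<eta> \<le> d + 1"
      using \<open>\<eta> \<ge> 1\<close> assms by (simp add: divide_le_eq)
    moreover have "\<eta> / 2 - \<eta> / d = \<eta> * c"
      by (simp add: c_def field_simps)
    ultimately show ?thesis
      unfolding fODE_damping_def by linarith
  qed
  then show ?thesis
    by (intro exI[of _ \<eta>0]) (auto simp: \<eta>0_def)
qed

theorem lemmaA2:
  fixes d :: real
  assumes "d > 2"
  shows "\<exists>\<eta>bar > 0. \<forall>\<eta>1 \<ge> \<eta>bar. \<forall>\<phi> \<psi> \<eta>2.
           \<eta>2 > \<eta>1 \<and> is_solution d \<phi> \<psi> {\<eta>1..\<eta>2} \<and> \<phi> \<eta>1 = 1 \<and> \<psi> \<eta>1 \<le> 0 \<and>
           0 \<le> \<phi> \<eta>2 \<and> \<phi> \<eta>2 \<le> 1/2 \<longrightarrow> \<psi> \<eta>2 < -1"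
proof -
  obtain \<eta>0 where "\<eta>0 > 0"
    and damping: "\<And>\<eta> v. \<eta>0 \<le> \<eta> \<Longrightarrow> v \<le> 1 \<Longrightarrow> 4 \<le> fODE_damping d \<eta> v"
    using fODE_damping_eventually_ge[OF assms, of 4] by auto
  have "\<psi> \<eta>2 < -1"
    if "\<eta>0 \<le> \<eta>1" "\<eta>1 < \<eta>2" and sol: "is_solution d \<phi> \<psi> {\<eta>1..\<eta>2}"
      and "\<phi> \<eta>1 = 1" "\<psi> \<eta>1 \<le> 0" "\<phi> \<eta>2 \<le> 1/2" for \<eta>1 \<eta>2 \<phi> \<psi>
  proof -
    have \<phi>': "\<And>\<xi>. \<xi> \<in> {\<eta>1..\<eta>2} \<Longrightarrow> (\<phi> has_real_derivative \<psi> \<xi>) (at \<xi> within {\<eta>1..\<eta>2})"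
      and \<psi>': "\<And>\<xi>. \<xi> \<in> {\<eta>1..\<eta>2} \<Longrightarrow> (\<psi> has_real_derivative
          fODE_damping d \<xi> (\<phi> \<xi>) * \<psi> \<xi> + \<phi> \<xi> * (1 - \<phi> \<xi>)) (at \<xi> within {\<eta>1..\<eta>2})"
      using sol by (auto simp: is_solution_def minus_fODE_eq[symmetric])
    have "continuous_on {\<eta>1..\<eta>2} (\<lambda>\<xi>. fODE_damping d \<xi> (\<phi> \<xi>))"
      unfolding fODE_damping_def using DERIV_continuous_on[OF \<phi>'] assms \<open>\<eta>0 > 0\<close> \<open>\<eta>0 \<le> \<eta>1\<close>
      by (intro continuous_intros) auto
    moreover have "1 \<le> 3 * (fODE_damping d \<xi> (\<phi> \<xi>) - 3)" if "\<xi> \<in> {\<eta>1..\<eta>2}" "\<phi> \<xi> \<le> 1" for \<xi>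
      using damping[of \<xi> "\<phi> \<xi>"] that \<open>\<eta>0 \<le> \<eta>1\<close> by auto
    ultimately have "\<phi> \<eta>2 \<le> 1 \<and> \<psi> \<eta>2 \<le> - 3 * (1 - \<phi> \<eta>2)"
      using \<open>\<eta>1 < \<eta>2\<close> \<open>\<phi> \<eta>1 = 1\<close> \<open>\<psi> \<eta>1 \<le> 0\<close>
      by (intro wedge_forward_invariant[OF _ \<phi>' \<psi>']) auto
    then show ?thesis
      using \<open>\<phi> \<eta>2 \<le> 1/2\<close> by (auto simp: algebra_simps)
  qed
  then show ?thesis
    using \<open>\<eta>0 > 0\<close> by blast
qed

end
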